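(* Let $\theta>0$ and consider the Yule process with immigration with immigration rate $\theta$ and birth rate $1$. For $0\le a<b$ let $S(a,b)$ denote the number of families observable in $(a,b)$. Then for $0\le a<b\le c<d$, $$\mathrm{Cov}(S(a,b),S(c,d))=\theta\log\left(\frac{(e^b-e^a+1)(e^d-e^c+1)}{e^d-e^c+e^b-e^a+1}\right).$$
   Context: Yule process with immigration: at time $0$ the population is empty; immigrants arrive at the points of a homogeneous Poisson process of rate $\theta$ on $[0,\infty)$, and each immigrant founds a new family; every individual, independently of everything else, gives birth to a new member of its own family at rate $1$ (no deaths). A family is observable in an interval $(a,b)$ if at least one member of that family (including its founding immigrant) is born (arrives) during $(a,b)$. *)

theory Defs
  imports "HOL-Probability.Probability"
begin

(* Construction of the Yule process with immigration from independent exponential clocks: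
   X i     : i-th inter-arrival time of the immigration Poisson process (Exp(theta));
   Y k j   : waiting time in family k from size j+1 to size j+2 (Exp(j+1)),
             since each of the j+1 members gives birth at rate 1. *)

definition immigrant_arrival :: "(nat \<Rightarrow> 'a \<Rightarrow> real) \<Rightarrow> nat \<Rightarrow> 'a \<Rightarrow> real" where
  "immigrant_arrival X k \<omega> = (\<Sum>i\<le>k. X i \<omega>)"

fun family_birth :: "(nat \<Rightarrow> 'a \<Rightarrow> real) \<Rightarrow> (nat \<Rightarrow> nat \<Rightarrow> 'a \<Rightarrow> real) \<Rightarrow> nat \<Rightarrow> nat \<Rightarrow> 'a \<Rightarrow> real" where
  "family_birth X Y k 0 \<omega> = immigrant_arrival X k \<omega>"
| "family_birth X Y k (Suc n) \<omega> = family_birth X Y k n \<omega> + Y k n \<omega>"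

definition observable_families ::
  "(nat \<Rightarrow> 'a \<Rightarrow> real) \<Rightarrow> (nat \<Rightarrow> nat \<Rightarrow> 'a \<Rightarrow> real) \<Rightarrow> real \<Rightarrow> real \<Rightarrow> 'a \<Rightarrow> real" where
  "observable_families X Y a b \<omega> =
     real (card {k. \<exists>n. a < family_birth X Y k n \<omega> \<and> family_birth X Y k n \<omega> < b})"

definition (in prob_space) covariance :: "('a \<Rightarrow> real) \<Rightarrow> ('a \<Rightarrow> real) \<Rightarrow> real" where
  "covariance U V = expectation (\<lambda>\<omega>. (U \<omega> - expectation U) * (V \<omega> - expectation V))"

end

theory Submission
  imports Defs
begin

text \<open>
  Let S U count the families with a member born in U. For U = (u1, v1) \<union> (u2, v2), let L r be the
  integral of exp over U \<inter> (r, \<infinity>). Given the first n births of a family, with n + 1 individuals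
  alive at time r, the probability that no later birth falls into U is (exp r / (exp r + L r)) ^ (n + 1);
  this is a martingale in n, so a family founded at t avoids U with probability
  q t = [t \<notin> U] exp t / (exp t + L t). The founding times form a Poisson process of rate \<theta>, hence
  E (S U) = \<theta> * integral of 1 - q over (0, \<infinity>) = \<theta> * ln (1 + L 0) when u1 \<ge> 0.

  In E (S A * S B) the terms of distinct families factor by independence and add up to
  E (S A) * E (S B), while for a single family
  [hits A] * [hits B] = [hits A] + [hits B] - [hits (A \<union> B)].
  Hence Cov (S A, S B) = E (S A) + E (S B) - E (S (A \<union> B)), which is the stated logarithm.
\<close>

lemma nn_integral_FTC_atLeast_piecewise:
  fixes F f :: "real \<Rightarrow> real"
  assumes "finite S" and cont: "continuous_on {a..} F"
    and deriv: "\<And>x. a < x \<Longrightarrow> x \<notin> S \<Longrightarrow> (F has_real_derivative f x) (at x)"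
    and nonneg: "\<And>x. a \<le> x \<Longrightarrow> 0 \<le> f x"
    and lim: "(F \<longlongrightarrow> c) at_top"
    and [measurable]: "f \<in> borel_measurable borel"
  shows "(\<integral>\<^sup>+x. ennreal (f x) * indicator {a..} x \<partial>lborel) = ennreal (c - F a)"
proof -
  have Icc: "(\<integral>\<^sup>+x. ennreal (f x) * indicator {a..a + real n} x \<partial>lborel) = ennreal (F (a + real n) - F a)"
    for n
  proof -
    have "(f has_integral (F (a + real n) - F a)) {a..a + real n}"
    proof (rule fundamental_theorem_of_calculus_interior_strong[OF \<open>finite S\<close>])
      show "continuous_on {a..a + real n} F"
        by (rule continuous_on_subset[OF cont]) auto
    qed (use deriv in \<open>auto simp: has_real_derivative_iff_has_vector_derivative\<close>)
    then show ?thesis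
      by (intro nn_integral_has_integral_lebesgue') (use nonneg in auto)
  qed
  have "(\<lambda>n. \<integral>\<^sup>+x. ennreal (f x) * indicator {a..a + real n} x \<partial>lborel)
        \<longlonglongrightarrow> (\<integral>\<^sup>+x. ennreal (f x) * indicator {a..} x \<partial>lborel)"
  proof (rule nn_integral_LIMSEQ)
    show "incseq (\<lambda>n x. ennreal (f x) * indicator {a..a + real n} x)"
      by (auto simp: incseq_def le_fun_def split: split_indicator)
    show "(\<lambda>n. ennreal (f x) * indicator {a..a + real n} x) \<longlonglongrightarrow> ennreal (f x) * indicator {a..} x" for x
    proof (rule tendsto_eventually)
      obtain N :: nat where "x - a \<le> real N" using real_arch_simple by blast
      then show "\<forall>\<^sub>F n in sequentially. ennreal (f x) * indicator {a..a + real n} x = ennreal (f x) * indicator {a..} x"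
        by (auto simp: eventually_sequentially indicator_def intro!: exI[of _ N])
    qed
  qed measurable
  moreover have "(\<lambda>n. ennreal (F (a + real n) - F a)) \<longlonglongrightarrow> ennreal (c - F a)"
    by (intro tendsto_ennrealI tendsto_diff tendsto_const filterlim_compose[OF lim]
        filterlim_tendsto_add_at_top[OF tendsto_const] filterlim_real_sequentially)
  ultimately show ?thesis
    using Icc LIMSEQ_unique by auto
qed

lemma suminf_ennreal_swap:
  fixes h :: "nat \<Rightarrow> nat \<Rightarrow> ennreal"
  shows "(\<Sum>i. \<Sum>j. h i j) = (\<Sum>j. \<Sum>i. h i j)"
proof -
  interpret pair_sigma_finite "count_space (UNIV::nat set)" "count_space (UNIV::nat set)"
    by (intro pair_sigma_finite.intro sigma_finite_measure_count_space)
  have "case_prod h \<in> borel_measurable (count_space UNIV \<Otimes>\<^sub>M count_space UNIV)"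
    by (simp add: pair_measure_countable)
  then show ?thesis
    using Fubini' by (simp add: nn_integral_count_space_nat)
qed

lemma suminf_ennreal_split_diagonal:
  fixes h :: "nat \<Rightarrow> nat \<Rightarrow> ennreal"
  shows "(\<Sum>k. \<Sum>l. h k l) = (\<Sum>k. h k k) + (\<Sum>k. \<Sum>m. h k (m + Suc k)) + (\<Sum>l. \<Sum>m. h (m + Suc l) l)"
proof -
  have row: "(\<Sum>l. h k l) = (\<Sum>m. h k (m + Suc k)) + h k k + (\<Sum>l. if l < k then h k l else 0)" for k
  proof -
    have "(\<Sum>l. h k l) = (\<Sum>m. h k (m + Suc k)) + (\<Sum>l<Suc k. h k l)"
      by (rule suminf_offset) simp
    moreover have "(\<Sum>l. if l < k then h k l else 0) = (\<Sum>l<k. h k l)"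
      by (subst suminf_finite[of "{..<k}"]) auto
    ultimately show ?thesis
      by (simp add: add_ac)
  qed
  have lower: "(\<Sum>k. \<Sum>l. if l < k then h k l else 0) = (\<Sum>l. \<Sum>m. h (m + Suc l) l)"
  proof -
    have "(\<Sum>k. if l < k then h k l else 0) = (\<Sum>m. h (m + Suc l) l)" for l
      using suminf_offset[of "\<lambda>k. if l < k then h k l else 0" "Suc l"] by simp
    then show ?thesis
      by (subst suminf_ennreal_swap) simp
  qed
  show ?thesis
    by (simp add: row lower suminf_add[OF summableI summableI, symmetric] add_ac)
qed

lemma suminf_erlang_density:
  assumes "0 < \<theta>"
  shows "(\<Sum>k. ennreal (erlang_density k \<theta> t)) = ennreal \<theta> * indicator {0..} t"
proof (cases "t < 0")
  case True
  then show ?thesis by (simp add: erlang_density_def)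
next
  case False
  have "(\<lambda>k. \<theta> * exp (- \<theta> * t) * ((\<theta> * t) ^ k /\<^sub>R fact k)) sums (\<theta> * exp (- \<theta> * t) * exp (\<theta> * t))"
    by (intro sums_mult exp_converges)
  moreover have "\<theta> * exp (- \<theta> * t) * exp (\<theta> * t) = \<theta>"
    by (simp add: mult.assoc exp_add[symmetric])
  moreover have "\<theta> * exp (- \<theta> * t) * ((\<theta> * t) ^ k /\<^sub>R fact k) = erlang_density k \<theta> t" for k
    using False by (simp add: erlang_density_def power_mult_distrib field_simps)
  ultimately have "(\<lambda>k. erlang_density k \<theta> t) sums \<theta>"
    by (simp only:)
  then have "(\<Sum>k. ennreal (erlang_density k \<theta> t)) = ennreal \<theta>"
    using assms by (intro suminf_ennreal_eq) auto
  then show ?thesis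
    using False by simp
qed

lemma suminf_nn_integral_erlang_density:
  assumes "0 < \<theta>" and [measurable]: "f \<in> borel_measurable borel"
  shows "(\<Sum>k. \<integral>\<^sup>+t. ennreal (erlang_density k \<theta> t) * f t \<partial>lborel)
       = ennreal \<theta> * (\<integral>\<^sup>+t. f t * indicator {0..} t \<partial>lborel)"
proof -
  have "(\<Sum>k. \<integral>\<^sup>+t. ennreal (erlang_density k \<theta> t) * f t \<partial>lborel)
      = (\<integral>\<^sup>+t. (\<Sum>k. ennreal (erlang_density k \<theta> t)) * f t \<partial>lborel)"
    by (subst nn_integral_suminf[symmetric]) (simp_all add: ennreal_suminf_multc)
  also have "\<dots> = (\<integral>\<^sup>+t. ennreal \<theta> * (f t * indicator {0..} t) \<partial>lborel)"
    using assms(1) by (simp add: suminf_erlang_density mult_ac)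
  also have "\<dots> = ennreal \<theta> * (\<integral>\<^sup>+t. f t * indicator {0..} t \<partial>lborel)"
    by (rule nn_integral_cmult) measurable
  finally show ?thesis .
qed

lemma nn_integral_shift_atLeast_0:
  fixes k :: "real \<Rightarrow> ennreal"
  assumes "0 \<le> t" and [measurable]: "k \<in> borel_measurable borel"
  shows "(\<integral>\<^sup>+r. k (t + r) * indicator {0..} r \<partial>lborel) = (\<integral>\<^sup>+s. k s * indicator {0..} s * of_bool (t \<le> s) \<partial>lborel)"
proof -
  have "(\<integral>\<^sup>+r. k (t + r) * indicator {0..} r \<partial>lborel)
      = (\<integral>\<^sup>+r. (\<lambda>s. k s * indicator {0..} s * of_bool (t \<le> s)) (t + r) \<partial>lborel)"
    using assms(1) by (intro nn_integral_cong) (auto simp: indicator_def)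
  also have "\<dots> = (\<integral>\<^sup>+s. k s * indicator {0..} s * of_bool (t \<le> s) \<partial>lborel)"
    using nn_integral_real_affine[of "\<lambda>s. k s * indicator {0..} s * of_bool (t \<le> s)" 1 t] by simp
  finally show ?thesis .
qed

lemma nn_integral_lborel_split_at:
  fixes f :: "real \<Rightarrow> ennreal"
  assumes [measurable]: "f \<in> borel_measurable borel"
  shows "(\<integral>\<^sup>+s. f s * of_bool (t \<le> s) \<partial>lborel) + (\<integral>\<^sup>+s. f s * of_bool (s \<le> t) \<partial>lborel) = integral\<^sup>N lborel f"
proof -
  have "(\<integral>\<^sup>+s. f s * of_bool (t \<le> s) \<partial>lborel) + (\<integral>\<^sup>+s. f s * of_bool (s \<le> t) \<partial>lborel)
      = (\<integral>\<^sup>+s. f s * of_bool (t \<le> s) + f s * of_bool (s \<le> t) \<partial>lborel)"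
    by (rule nn_integral_add[symmetric]) measurable
  also have "\<dots> = integral\<^sup>N lborel f"
    by (rule nn_integral_cong_AE, use AE_lborel_singleton[of t] in eventually_elim) auto
  finally show ?thesis .
qed

lemma nn_integral_product_split_order:
  fixes f g :: "real \<Rightarrow> ennreal"
  assumes [measurable]: "f \<in> borel_measurable borel" "g \<in> borel_measurable borel"
  shows "(\<integral>\<^sup>+t. f t * indicator {0..} t * (\<integral>\<^sup>+r. g (t + r) * indicator {0..} r \<partial>lborel) \<partial>lborel)
       + (\<integral>\<^sup>+t. g t * indicator {0..} t * (\<integral>\<^sup>+r. f (t + r) * indicator {0..} r \<partial>lborel) \<partial>lborel)
       = (\<integral>\<^sup>+t. f t * indicator {0..} t \<partial>lborel) * (\<integral>\<^sup>+t. g t * indicator {0..} t \<partial>lborel)"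
proof -
  define F where "F t = f t * indicator {0..} t" for t
  define G where "G t = g t * indicator {0..} t" for t
  have [measurable]: "F \<in> borel_measurable borel" "G \<in> borel_measurable borel"
    unfolding F_def G_def by measurable
  have later: "h t * indicator {0..} t * (\<integral>\<^sup>+r. k (t + r) * indicator {0..} r \<partial>lborel)
      = (\<integral>\<^sup>+s. h t * indicator {0..} t * (k s * indicator {0..} s) * of_bool (t \<le> s) \<partial>lborel)"
    if [measurable]: "k \<in> borel_measurable borel" for h k :: "real \<Rightarrow> ennreal" and t :: real
    by (cases "0 \<le> t") (simp_all add: nn_integral_shift_atLeast_0 nn_integral_cmult mult.assoc)
  have "(\<integral>\<^sup>+t. g t * indicator {0..} t * (\<integral>\<^sup>+r. f (t + r) * indicator {0..} r \<partial>lborel) \<partial>lborel)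
      = (\<integral>\<^sup>+t. \<integral>\<^sup>+s. G t * F s * of_bool (t \<le> s) \<partial>lborel \<partial>lborel)"
    by (simp add: later F_def G_def)
  also have "\<dots> = (\<integral>\<^sup>+s. \<integral>\<^sup>+t. G t * F s * of_bool (t \<le> s) \<partial>lborel \<partial>lborel)"
    by (rule lborel_pair.Fubini') measurable
  finally have swapped:
    "(\<integral>\<^sup>+t. g t * indicator {0..} t * (\<integral>\<^sup>+r. f (t + r) * indicator {0..} r \<partial>lborel) \<partial>lborel)
      = (\<integral>\<^sup>+t. \<integral>\<^sup>+s. F t * G s * of_bool (s \<le> t) \<partial>lborel \<partial>lborel)"
    by (simp add: mult_ac)
  have "(\<integral>\<^sup>+t. f t * indicator {0..} t * (\<integral>\<^sup>+r. g (t + r) * indicator {0..} r \<partial>lborel) \<partial>lborel)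
      = (\<integral>\<^sup>+t. \<integral>\<^sup>+s. F t * G s * of_bool (t \<le> s) \<partial>lborel \<partial>lborel)"
    by (simp add: later F_def G_def)
  then have "(\<integral>\<^sup>+t. f t * indicator {0..} t * (\<integral>\<^sup>+r. g (t + r) * indicator {0..} r \<partial>lborel) \<partial>lborel)
       + (\<integral>\<^sup>+t. g t * indicator {0..} t * (\<integral>\<^sup>+r. f (t + r) * indicator {0..} r \<partial>lborel) \<partial>lborel)
      = (\<integral>\<^sup>+t. (\<integral>\<^sup>+s. F t * G s * of_bool (t \<le> s) \<partial>lborel) + (\<integral>\<^sup>+s. F t * G s * of_bool (s \<le> t) \<partial>lborel) \<partial>lborel)"
    by (subst nn_integral_add) (simp_all add: swapped)
  also have "\<dots> = (\<integral>\<^sup>+t. \<integral>\<^sup>+s. F t * G s \<partial>lborel \<partial>lborel)"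
    by (simp add: nn_integral_lborel_split_at)
  also have "\<dots> = (\<integral>\<^sup>+t. F t \<partial>lborel) * (\<integral>\<^sup>+s. G s \<partial>lborel)"
    by (simp add: nn_integral_cmult nn_integral_multc)
  finally show ?thesis
    by (simp add: F_def G_def)
qed

lemma has_real_derivative_neg_divide_power:
  fixes g :: "real \<Rightarrow> real"
  assumes g: "(g has_real_derivative g') (at y)" and "g y \<noteq> 0" "0 < m"
  shows "((\<lambda>y. - c / g y ^ m) has_real_derivative real m * c * g' / g y ^ Suc m) (at y)"
proof -
  obtain k where m: "m = Suc k"
    using \<open>0 < m\<close> gr0_implies_Suc by blast
  have "((\<lambda>y. - c / g y ^ m) has_real_derivative
      (0 * g y ^ m - - c * (real m * (g' * g y ^ (m - Suc 0)))) / (g y ^ m * g y ^ m)) (at y)"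
    using \<open>g y \<noteq> 0\<close> by (intro DERIV_divide DERIV_const DERIV_power g) auto
  moreover have "(0 * g y ^ m - - c * (real m * (g' * g y ^ (m - Suc 0)))) / (g y ^ m * g y ^ m)
      = real m * c * g' / g y ^ Suc m"
    using \<open>g y \<noteq> 0\<close> by (simp add: m field_simps power_add[symmetric])
  ultimately show ?thesis
    by simp
qed

lemma ennreal_eq_diff_if_add_eq:
  assumes "x + ennreal c = ennreal d" "0 \<le> c" "0 \<le> d"
  shows "x = ennreal (d - c)" "c \<le> d"
proof -
  have "x = ennreal d - ennreal c"
    using assms(1) by (metis ennreal_add_diff_cancel_right ennreal_neq_top)
  then show "x = ennreal (d - c)"
    using assms(2) by (simp add: ennreal_minus)
  have "ennreal c \<le> ennreal d"
    using assms(1) by (metis add.commute le_iff_add)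
  then show "c \<le> d"
    using assms(3) by (simp add: ennreal_le_iff)
qed

lemma enn2real_suminf_of_bool: "enn2real (\<Sum>k. of_bool (P k)) = real (card {k. P k})"
proof -
  have "(\<Sum>k. of_bool (P k) :: ennreal) = emeasure (count_space UNIV) {k. P k}"
    by (simp add: nn_integral_count_space_nat[symmetric] nn_integral_indicator[symmetric] indicator_def
        del: nn_integral_indicator)
  then show ?thesis
    by (simp add: emeasure_count_space)
qed

lemma (in prob_space) indep_sets_reindex:
  assumes indep: "indep_sets F (f ` I)" and inj: "inj_on f I"
  shows "indep_sets (\<lambda>i. F (f i)) I"
proof (rule indep_setsI)
  show "F (f i) \<subseteq> events" if "i \<in> I" for i
    using indep that by (auto simp: indep_sets_def)
next
  fix A J assume J: "J \<noteq> {}" "J \<subseteq> I" "finite J" and A: "\<forall>j\<in>J. A j \<in> F (f j)"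
  define A' where "A' x = A (the_inv_into I f x)" for x
  have A'_f: "A' (f j) = A j" if "j \<in> J" for j
    using J that inj by (auto simp: A'_def the_inv_into_f_f)
  have "prob (\<Inter>x\<in>f ` J. A' x) = (\<Prod>x\<in>f ` J. prob (A' x))"
    by (rule indep_setsD[OF indep]) (use J A A'_f in auto)
  moreover have "(\<Prod>x\<in>f ` J. prob (A' x)) = (\<Prod>j\<in>J. prob (A j))"
    using inj J A'_f by (subst prod.reindex) (auto intro: inj_on_subset)
  ultimately show "prob (\<Inter>j\<in>J. A j) = (\<Prod>j\<in>J. prob (A j))"
    using A'_f by simp
qed

lemma (in prob_space) indep_vars_reindex:
  assumes "indep_vars M' X (f ` I)" and "inj_on f I"
  shows "indep_vars (\<lambda>i. M' (f i)) (\<lambda>i. X (f i)) I"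
  using assms unfolding indep_vars_def
  by (auto intro!: indep_sets_reindex[where F="\<lambda>i. sigma_sets (space M) {X i -` A \<inter> space M |A. A \<in> sets (M' i)}", simplified])

lemma (in prob_space) indep_var_nn_integral:
  assumes indep: "indep_var S X T Y" and f: "f \<in> borel_measurable (S \<Otimes>\<^sub>M T)"
  shows "(\<integral>\<^sup>+\<omega>. f (X \<omega>, Y \<omega>) \<partial>M) = (\<integral>\<^sup>+\<omega>. \<integral>\<^sup>+\<omega>'. f (X \<omega>, Y \<omega>') \<partial>M \<partial>M)"
proof -
  have X: "random_variable S X" and Y: "random_variable T Y"
    and joint: "distr M S X \<Otimes>\<^sub>M distr M T Y = distr M (S \<Otimes>\<^sub>M T) (\<lambda>\<omega>. (X \<omega>, Y \<omega>))"
    using indep by (simp_all add: indep_var_distribution_eq)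
  interpret Y: prob_space "distr M T Y"
    using Y by (rule prob_space_distr)
  have f': "f \<in> borel_measurable (S \<Otimes>\<^sub>M distr M T Y)"
    using f by (simp cong: measurable_cong_sets)
  have "(\<integral>\<^sup>+\<omega>. f (X \<omega>, Y \<omega>) \<partial>M) = integral\<^sup>N (distr M S X \<Otimes>\<^sub>M distr M T Y) f"
    using X Y f by (simp add: joint nn_integral_distr)
  also have "\<dots> = (\<integral>\<^sup>+x. \<integral>\<^sup>+y. f (x, y) \<partial>distr M T Y \<partial>distr M S X)"
    using f by (intro Y.nn_integral_fst[symmetric]) (simp cong: measurable_cong_sets)
  also have "\<dots> = (\<integral>\<^sup>+\<omega>. \<integral>\<^sup>+y. f (X \<omega>, y) \<partial>distr M T Y \<partial>M)"
    using X Y.borel_measurable_nn_integral_fst[OF f'] by (simp add: nn_integral_distr)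
  also have "\<dots> = (\<integral>\<^sup>+\<omega>. \<integral>\<^sup>+\<omega>'. f (X \<omega>, Y \<omega>') \<partial>M \<partial>M)"
  proof (rule nn_integral_cong)
    fix \<omega> assume "\<omega> \<in> space M"
    then have "X \<omega> \<in> space S"
      using X by (auto simp: measurable_def)
    then show "(\<integral>\<^sup>+y. f (X \<omega>, y) \<partial>distr M T Y) = (\<integral>\<^sup>+\<omega>'. f (X \<omega>, Y \<omega>') \<partial>M)"
      using Y f by (simp add: nn_integral_distr)
  qed
  finally show ?thesis .
qed

lemma (in prob_space) nn_integral_indep_blocks:
  assumes "indep_vars M' Z I" "A \<inter> B = {}" "A \<subseteq> I" "B \<subseteq> I"
    and [measurable]: "F \<in> measurable (PiM A M') N1" "G \<in> measurable (PiM B M') N2"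
    and [measurable]: "h \<in> borel_measurable (N1 \<Otimes>\<^sub>M N2)"
  shows "(\<integral>\<^sup>+\<omega>. h (F (restrict (\<lambda>i. Z i \<omega>) A), G (restrict (\<lambda>i. Z i \<omega>) B)) \<partial>M)
       = (\<integral>\<^sup>+\<omega>. \<integral>\<^sup>+\<omega>'. h (F (restrict (\<lambda>i. Z i \<omega>) A), G (restrict (\<lambda>i. Z i \<omega>') B)) \<partial>M \<partial>M)"
  using indep_var_nn_integral[OF indep_var_restrict[OF assms(1-4)], of "\<lambda>x. h (F (fst x), G (snd x))"]
  by simp

lemma (in prob_space) covariance_enn2real:
  fixes S T :: "'a \<Rightarrow> ennreal"
  assumes [measurable]: "S \<in> borel_measurable M" "T \<in> borel_measurable M"
    and "integral\<^sup>N M S = ennreal x" "integral\<^sup>N M T = ennreal y"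
    and "(\<integral>\<^sup>+\<omega>. S \<omega> * T \<omega> \<partial>M) = ennreal z"
    and "0 \<le> x" "0 \<le> y" "0 \<le> z"
  shows "covariance (\<lambda>\<omega>. enn2real (S \<omega>)) (\<lambda>\<omega>. enn2real (T \<omega>)) = z - x * y"
proof -
  have real_mean: "integrable M (\<lambda>\<omega>. enn2real (R \<omega>)) \<and> expectation (\<lambda>\<omega>. enn2real (R \<omega>)) = r"
    if [measurable]: "R \<in> borel_measurable M" and R: "integral\<^sup>N M R = ennreal r" "0 \<le> r" for R r
  proof -
    have "AE \<omega> in M. R \<omega> \<noteq> \<infinity>"
      using R by (intro nn_integral_noteq_infinite) auto
    then have "(\<integral>\<^sup>+\<omega>. ennreal (enn2real (R \<omega>)) \<partial>M) = ennreal r"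
      using R by (subst nn_integral_cong_AE[where v=R]) (auto simp: less_top)
    then show ?thesis
      using R by (subst (asm) nn_integral_eq_integrable) auto
  qed
  have "integrable M (\<lambda>\<omega>. enn2real (S \<omega>))" "expectation (\<lambda>\<omega>. enn2real (S \<omega>)) = x"
    "integrable M (\<lambda>\<omega>. enn2real (T \<omega>))" "expectation (\<lambda>\<omega>. enn2real (T \<omega>)) = y"
    "integrable M (\<lambda>\<omega>. enn2real (S \<omega>) * enn2real (T \<omega>))"
    "expectation (\<lambda>\<omega>. enn2real (S \<omega>) * enn2real (T \<omega>)) = z"
    using real_mean[of S x] real_mean[of T y] real_mean[of "\<lambda>\<omega>. S \<omega> * T \<omega>" z] assms
    by (simp_all add: enn2real_mult)
  then show ?thesis
    by (simp add: covariance_def algebra_simps prob_space)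
qed

lemma measurable_PiM_reindex:
  assumes "range f \<subseteq> A"
  shows "(\<lambda>x j. x (f j)) \<in> measurable (PiM A (\<lambda>_. N)) (PiM UNIV (\<lambda>_. N))"
proof -
  have "(\<lambda>x. restrict (\<lambda>j. x (f j)) UNIV) \<in> measurable (PiM A (\<lambda>_. N)) (PiM UNIV (\<lambda>_. N))"
    using assms by (intro measurable_restrict measurable_component_singleton) auto
  then show ?thesis
    by (simp add: restrict_def)
qed

lemma borel_measurable_sum_PiM_components:
  fixes f :: "'i \<Rightarrow> 'j"
  shows "f ` I \<subseteq> A \<Longrightarrow> (\<lambda>x. \<Sum>i\<in>I. x (f i) :: real) \<in> borel_measurable (PiM A (\<lambda>_. borel))"
  by (intro borel_measurable_sum measurable_component_singleton) auto

text \<open>For u \<le> v, the integral of exp over {u<..<v} \<inter> {s<..}.\<close>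

definition exp_mass_above :: "real \<Rightarrow> real \<Rightarrow> real \<Rightarrow> real" where
  "exp_mass_above u v s = exp v - exp (max u (min v s))"

lemma exp_mass_above_nonneg: "u \<le> v \<Longrightarrow> 0 \<le> exp_mass_above u v s"
  by (auto simp: exp_mass_above_def)

lemma exp_mass_above_has_derivative:
  assumes "u \<le> v" "s \<noteq> u" "s \<noteq> v"
  shows "(exp_mass_above u v has_real_derivative (if u < s \<and> s < v then - exp s else 0)) (at s)"
proof -
  consider "s < u" | "u < s" "s < v" | "v < s"
    using assms by linarith
  then show ?thesis
  proof cases
    case 1
    have "((\<lambda>_. exp v - exp u) has_real_derivative 0) (at s)"
      by (rule DERIV_const)
    then show ?thesis
      using 1 by (rule_tac has_field_derivative_transform_within_open[where S="{..<u}"])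
        (auto simp: exp_mass_above_def)
  next
    case 2
    have "((\<lambda>x. exp v - exp x) has_real_derivative - exp s) (at s)"
      by (auto intro!: derivative_eq_intros)
    then show ?thesis
      using 2 by (rule_tac has_field_derivative_transform_within_open[where S="{u<..<v}"])
        (auto simp: exp_mass_above_def)
  next
    case 3
    have "((\<lambda>_. 0) has_real_derivative 0) (at s)"
      by (rule DERIV_const)
    then show ?thesis
      using 3 assms by (rule_tac has_field_derivative_transform_within_open[where S="{v<..}"])
        (auto simp: exp_mass_above_def)
  qed
qed

lemma continuous_on_exp_mass_above [continuous_intros]:
  "continuous_on A f \<Longrightarrow> continuous_on A (\<lambda>x. exp_mass_above u v (f x))"
  unfolding exp_mass_above_def by (intro continuous_intros)

lemma borel_measurable_exp_mass_above [measurable]: "exp_mass_above u v \<in> borel_measurable borel"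
  by (intro borel_measurable_continuous_onI continuous_on_exp_mass_above continuous_on_id)

locale two_intervals =
  fixes u1 v1 u2 v2 :: real
  assumes ordered: "u1 \<le> v1" "v1 \<le> u2" "u2 \<le> v2"
begin

definition U :: "real set" where
  "U = {u1<..<v1} \<union> {u2<..<v2}"

definition L :: "real \<Rightarrow> real" where
  "L s = exp_mass_above u1 v1 s + exp_mass_above u2 v2 s"

definition avoid_prob :: "real \<Rightarrow> nat \<Rightarrow> real" where
  "avoid_prob r m = (exp r / (exp r + L r)) ^ m"

definition family_avoid_prob :: "real \<Rightarrow> real" where
  "family_avoid_prob t = (if t \<in> U then 0 else avoid_prob t 1)"

lemma L_nonneg: "0 \<le> L s"
  using ordered by (auto simp: L_def intro!: add_nonneg_nonneg exp_mass_above_nonneg)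

lemma exp_L_pos: "0 < exp s + L s"
  using L_nonneg[of s] by (simp add: add_pos_nonneg)

lemma exp_L_neq_0: "exp s + L s \<noteq> 0"
  using exp_L_pos[of s] by simp

lemma L_eq_0: "v2 \<le> s \<Longrightarrow> L s = 0"
  using ordered by (auto simp: L_def exp_mass_above_def max_def min_def)

lemma L_0: "0 \<le> u1 \<Longrightarrow> L 0 = exp v1 - exp u1 + (exp v2 - exp u2)"
  using ordered by (simp add: L_def exp_mass_above_def)

lemma sets_U [measurable]: "U \<in> sets borel"
  unfolding U_def by measurable

lemma borel_measurable_L [measurable]: "L \<in> borel_measurable borel"
  unfolding L_def by measurable

lemma borel_measurable_avoid_prob [measurable]: "(\<lambda>r. avoid_prob r m) \<in> borel_measurable borel"
  unfolding avoid_prob_def by measurable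

lemma borel_measurable_family_avoid_prob [measurable]: "family_avoid_prob \<in> borel_measurable borel"
  unfolding family_avoid_prob_def by measurable

lemma continuous_on_L [continuous_intros]: "continuous_on A f \<Longrightarrow> continuous_on A (\<lambda>x. L (f x))"
  unfolding L_def by (intro continuous_intros)

lemma L_has_derivative:
  assumes "s \<notin> {u1, v1, u2, v2}"
  shows "(L has_real_derivative (if s \<in> U then - exp s else 0)) (at s)"
proof -
  have "((\<lambda>s. exp_mass_above u1 v1 s + exp_mass_above u2 v2 s) has_real_derivative
      (if u1 < s \<and> s < v1 then - exp s else 0) + (if u2 < s \<and> s < v2 then - exp s else 0)) (at s)"
    using assms ordered by (intro DERIV_add exp_mass_above_has_derivative) auto
  moreover have "(if u1 < s \<and> s < v1 then - exp s else 0) + (if u2 < s \<and> s < v2 then - exp s else 0)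
      = (if s \<in> U then - exp s else 0)"
    using ordered by (auto simp: U_def)
  ultimately show ?thesis
    by (simp add: L_def[abs_def])
qed

lemma avoid_prob_nonneg: "0 \<le> avoid_prob r m"
  using exp_L_pos[of r] by (simp add: avoid_prob_def)

lemma avoid_prob_le_1: "avoid_prob r m \<le> 1"
  using exp_L_pos[of r] L_nonneg[of r] by (simp add: avoid_prob_def power_le_one)

lemma avoid_prob_eq_1: "v2 \<le> r \<Longrightarrow> avoid_prob r m = 1"
  by (simp add: avoid_prob_def L_eq_0)

lemma family_avoid_prob_nonneg: "0 \<le> family_avoid_prob t"
  using avoid_prob_nonneg by (simp add: family_avoid_prob_def)

lemma family_avoid_prob_le_1: "family_avoid_prob t \<le> 1"
  using avoid_prob_le_1 by (simp add: family_avoid_prob_def)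

lemma neg_divide_exp_L_power_has_derivative:
  assumes "0 < m" "s + y \<notin> {u1, v1, u2, v2}"
  shows "((\<lambda>y. - c / (exp (s + y) + L (s + y)) ^ m) has_real_derivative
      real m * c * (if s + y \<in> U then 0 else exp (s + y)) / (exp (s + y) + L (s + y)) ^ Suc m) (at y)"
proof (rule has_real_derivative_neg_divide_power)
  show "((\<lambda>y. exp (s + y) + L (s + y)) has_real_derivative (if s + y \<in> U then 0 else exp (s + y))) (at y)"
    using DERIV_chain2[OF L_has_derivative[OF assms(2)] DERIV_add[OF DERIV_const DERIV_ident]]
    by (auto intro!: derivative_eq_intros)
qed (use assms exp_L_neq_0 in auto)

text \<open>
  The next birth among m individuals comes after an Exp(m) waiting time; it must fall outside U,
  after which m + 1 individuals have to avoid U.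
\<close>

lemma nn_integral_exponential_avoid_prob:
  assumes "0 < m"
  shows "(\<integral>\<^sup>+y. ennreal (exponential_density (real m) y) *
            ennreal (avoid_prob (s + y) (Suc m) * of_bool (s + y \<notin> U)) \<partial>lborel) = ennreal (avoid_prob s m)"
proof -
  define g where "g y = exp (s + y) + L (s + y)" for y
  define f where "f y = real m * exp (real m * s) * (if s + y \<in> U then 0 else exp (s + y)) / g y ^ Suc m"
    for y
  define F where "F y = - exp (real m * s) / g y ^ m" for y
  have integrand: "ennreal (exponential_density (real m) y) * ennreal (avoid_prob (s + y) (Suc m) * of_bool (s + y \<notin> U))
      = ennreal (f y) * indicator {0..} y" for y
  proof (cases "0 \<le> y")
    case True
    have "exp (- y * real m) * exp (s + y) ^ Suc m = exp (real m * s) * exp (s + y)"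
      by (simp add: exp_of_nat_mult[symmetric] exp_add[symmetric] algebra_simps del: exp_of_nat_mult)
    then have "exponential_density (real m) y * (avoid_prob (s + y) (Suc m) * of_bool (s + y \<notin> U)) = f y"
      using True by (simp add: exponential_density_def avoid_prob_def f_def g_def power_divide)
    then show ?thesis
      using True assms by (simp add: ennreal_mult'[symmetric] exponential_density_def)
  qed (simp add: exponential_density_def)
  have "(\<integral>\<^sup>+y. ennreal (f y) * indicator {0..} y \<partial>lborel) = ennreal (0 - F 0)"
  proof (rule nn_integral_FTC_atLeast_piecewise[where S="(\<lambda>k. k - s) ` {u1, v1, u2, v2}"])
    show "continuous_on {0..} F"
      unfolding F_def g_def by (intro continuous_intros) (simp add: exp_L_neq_0)
    show "(F has_real_derivative f y) (at y)" if "y \<notin> (\<lambda>k. k - s) ` {u1, v1, u2, v2}" for y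
      unfolding F_def f_def g_def using assms that
      by (intro neg_divide_exp_L_power_has_derivative) force+
    show "0 \<le> f y" for y
      using exp_L_pos[of "s + y"] by (simp add: f_def g_def)
    have "\<forall>\<^sub>F y in at_top. - exp (real m * s) * inverse (exp (s + y) ^ m) = F y"
      using eventually_ge_at_top[of "v2 - s"] by eventually_elim (simp add: F_def g_def L_eq_0 divide_inverse)
    moreover have "((\<lambda>y. - exp (real m * s) * inverse (exp (s + y) ^ m)) \<longlongrightarrow> - exp (real m * s) * 0) at_top"
      by (intro tendsto_mult tendsto_const tendsto_inverse_0_at_top filterlim_pow_at_top[OF assms]
          filterlim_compose[OF exp_at_top] filterlim_tendsto_add_at_top[OF tendsto_const filterlim_ident])
    ultimately show "(F \<longlongrightarrow> 0) at_top"
      by (simp add: tendsto_cong)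
    show "f \<in> borel_measurable borel"
      unfolding f_def g_def by measurable
  qed simp
  moreover have "0 - F 0 = avoid_prob s m"
    by (simp add: F_def g_def avoid_prob_def power_divide exp_of_nat_mult[symmetric] mult.commute)
  ultimately show ?thesis
    by (simp add: integrand)
qed

lemma nn_integral_family_hit_prob:
  "(\<integral>\<^sup>+t. ennreal (1 - family_avoid_prob t) * indicator {0..} t \<partial>lborel) = ennreal (ln (1 + L 0))"
proof -
  define F where "F t = t - ln (exp t + L t)" for t
  have "(\<integral>\<^sup>+t. ennreal (1 - family_avoid_prob t) * indicator {0..} t \<partial>lborel) = ennreal (0 - F 0)"
  proof (rule nn_integral_FTC_atLeast_piecewise[where S="{u1, v1, u2, v2}"])
    show "continuous_on {0..} F"
      unfolding F_def using exp_L_pos by (intro continuous_intros) (auto simp: exp_L_neq_0)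
    show "(F has_real_derivative (1 - family_avoid_prob t)) (at t)" if "t \<notin> {u1, v1, u2, v2}" for t
      unfolding F_def using exp_L_pos[of t]
      by (auto intro!: derivative_eq_intros L_has_derivative[OF that]
          simp: family_avoid_prob_def avoid_prob_def field_simps)
    show "0 \<le> 1 - family_avoid_prob t" for t
      using family_avoid_prob_le_1[of t] by simp
    have "\<forall>\<^sub>F t in at_top. F t = 0"
      using eventually_ge_at_top[of v2] by eventually_elim (simp add: F_def L_eq_0)
    then show "(F \<longlongrightarrow> 0) at_top"
      by (rule tendsto_eventually)
  qed auto
  then show ?thesis
    by (simp add: F_def)
qed

end

definition yule_waits :: "(nat \<Rightarrow> real) measure" where
  "yule_waits = PiM UNIV (\<lambda>j. density lborel (exponential_density (real (Suc j))))"

interpretation yule_waits: prob_space yule_waits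
  unfolding yule_waits_def by (intro prob_space_PiM prob_space_exponential_density) simp

lemma sets_yule_waits [measurable_cong]: "sets yule_waits = sets (PiM UNIV (\<lambda>_. borel))"
  unfolding yule_waits_def by (intro sets_PiM_cong) simp_all

definition hits :: "real set \<Rightarrow> real \<times> (nat \<Rightarrow> real) \<Rightarrow> bool" where
  "hits U x \<longleftrightarrow> (\<exists>n. fst x + (\<Sum>j<n. snd x j) \<in> U)"

lemma measurable_hits [measurable]:
  assumes "U \<in> sets borel"
  shows "Measurable.pred (borel \<Otimes>\<^sub>M PiM UNIV (\<lambda>_. borel)) (hits U)"
  unfolding hits_def[abs_def] by (rule pred_intros_countable, rule pred_sets2[OF assms]) measurable

definition hit_prob :: "real set \<Rightarrow> real \<Rightarrow> ennreal" where
  "hit_prob U t = (\<integral>\<^sup>+w. of_bool (hits U (t, w)) \<partial>yule_waits)"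

lemma borel_measurable_hit_prob [measurable]:
  assumes "U \<in> sets borel"
  shows "hit_prob U \<in> borel_measurable borel"
  using measurable_hits[OF assms] unfolding hit_prob_def[abs_def] by measurable

locale yule_births = prob_space M for M :: "'a measure" +
  fixes W :: "nat \<Rightarrow> 'a \<Rightarrow> real"
  assumes indep_W: "indep_vars (\<lambda>_. borel) W UNIV"
    and exponential_W: "\<And>j. distributed M lborel (W j) (exponential_density (real (Suc j)))"
begin

lemma measurable_W [measurable]: "W j \<in> borel_measurable M"
  using exponential_W[of j] by (simp add: distributed_def)

definition birth_time :: "nat \<Rightarrow> 'a \<Rightarrow> real" where
  "birth_time n \<omega> = (\<Sum>j<n. W j \<omega>)"

lemma measurable_birth_time [measurable]: "birth_time n \<in> borel_measurable M"
  unfolding birth_time_def by measurable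

lemma distr_W: "distr M (PiM UNIV (\<lambda>_. borel)) (\<lambda>\<omega> j. W j \<omega>) = yule_waits"
proof -
  have "distr M (PiM UNIV (\<lambda>_. borel)) (\<lambda>\<omega>. \<lambda>j\<in>UNIV. W j \<omega>) = PiM UNIV (\<lambda>j. distr M borel (W j))"
    using indep_W by (subst indep_vars_iff_distr_eq_PiM[symmetric]) simp_all
  also have "(\<lambda>j. distr M borel (W j)) = (\<lambda>j. density lborel (exponential_density (real (Suc j))))"
  proof
    fix j
    have "distr M borel (W j) = distr M lborel (W j)"
      by (rule distr_cong) simp_all
    then show "distr M borel (W j) = density lborel (exponential_density (real (Suc j)))"
      using exponential_W[of j] by (simp add: distributed_distr_eq_density)
  qed
  finally show ?thesis
    by (simp add: yule_waits_def)
qed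

lemma measurable_W_sequence [measurable]: "(\<lambda>\<omega> j. W j \<omega>) \<in> measurable M (PiM UNIV (\<lambda>_. borel))"
proof -
  have "(\<lambda>\<omega>. restrict (\<lambda>j. W j \<omega>) UNIV) \<in> measurable M (PiM UNIV (\<lambda>_. borel))"
    by measurable
  then show ?thesis
    by (simp add: restrict_def)
qed

lemma nn_integral_W_sequence:
  "f \<in> borel_measurable (PiM UNIV (\<lambda>_. borel)) \<Longrightarrow> (\<integral>\<^sup>+\<omega>. f (\<lambda>j. W j \<omega>) \<partial>M) = integral\<^sup>N yule_waits f"
  by (subst distr_W[symmetric]) (simp add: nn_integral_distr[OF measurable_W_sequence])

lemma nn_integral_exp_neg_W:
  "(\<integral>\<^sup>+\<omega>. ennreal (exp (- W j \<omega>)) \<partial>M) = ennreal (real (Suc j) / real (Suc (Suc j)))"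
proof -
  define l where "l = real (Suc j)"
  have l: "0 < l"
    by (simp add: l_def)
  have "(\<integral>\<^sup>+\<omega>. ennreal (exp (- W j \<omega>)) \<partial>M)
      = (\<integral>\<^sup>+y. ennreal (exponential_density l y) * ennreal (exp (- y)) \<partial>lborel)"
    unfolding l_def by (rule distributed_nn_integral[OF exponential_W, symmetric]) measurable
  also have "\<dots> = (\<integral>\<^sup>+y. ennreal (l * exp (- (l + 1) * y)) * indicator {0..} y \<partial>lborel)"
    using l by (intro nn_integral_cong)
      (auto simp: exponential_density_def indicator_def ennreal_mult'[symmetric] exp_add[symmetric] algebra_simps)
  also have "\<dots> = ennreal (0 - (- l / (l + 1) * exp (- (l + 1) * 0)))"
  proof (rule nn_integral_FTC_atLeast)
    show "((\<lambda>y. - l / (l + 1) * exp (- (l + 1) * y)) has_real_derivative l * exp (- (l + 1) * x)) (at x)" for x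
    proof -
      have "((\<lambda>y. - l / (l + 1) * exp (- (l + 1) * y)) has_real_derivative
          - l / (l + 1) * (exp (- (l + 1) * x) * (- (l + 1) * 1))) (at x)"
        by (intro DERIV_cmult DERIV_fun_exp DERIV_cmult DERIV_ident)
      moreover have "- l / (l + 1) * (exp (- (l + 1) * x) * (- (l + 1) * 1)) = l * exp (- (l + 1) * x)"
        using l by (simp add: field_simps)
      ultimately show ?thesis
        by simp
    qed
    have "((\<lambda>y. - l / (l + 1) * exp (- (l + 1) * y)) \<longlongrightarrow> - l / (l + 1) * 0) at_top"
      using l by (intro tendsto_mult tendsto_const filterlim_compose[OF exp_at_bot]
          filterlim_tendsto_neg_mult_at_bot[OF tendsto_const _ filterlim_ident]) simp
    then show "((\<lambda>y. - l / (l + 1) * exp (- (l + 1) * y)) \<longlongrightarrow> 0) at_top"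
      by simp
  qed (use l in auto)
  also have "0 - (- l / (l + 1) * exp (- (l + 1) * 0)) = real (Suc j) / real (Suc (Suc j))"
    by (simp add: l_def field_simps)
  finally show ?thesis .
qed

lemma nn_integral_exp_neg_birth_time:
  "(\<integral>\<^sup>+\<omega>. ennreal (exp (- birth_time n \<omega>)) \<partial>M) = ennreal (1 / real (Suc n))"
proof -
  have indep: "indep_vars (\<lambda>_. borel) (\<lambda>j \<omega>. ennreal (exp (- W j \<omega>))) {..<n}"
    by (rule indep_vars_compose2[OF indep_vars_subset[OF indep_W]]) auto
  have "(\<integral>\<^sup>+\<omega>. ennreal (exp (- birth_time n \<omega>)) \<partial>M) = (\<integral>\<^sup>+\<omega>. (\<Prod>j<n. ennreal (exp (- W j \<omega>))) \<partial>M)"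
    by (simp add: birth_time_def exp_sum[symmetric] prod_ennreal sum_negf)
  also have "\<dots> = (\<Prod>j<n. \<integral>\<^sup>+\<omega>. ennreal (exp (- W j \<omega>)) \<partial>M)"
    by (rule indep_vars_nn_integral[OF _ indep]) auto
  also have "\<dots> = ennreal (\<Prod>j<n. real (Suc j) / real (Suc (Suc j)))"
    by (simp add: nn_integral_exp_neg_W prod_ennreal del: of_nat_Suc)
  also have "(\<Prod>j<n. real (Suc j) / real (Suc (Suc j))) = 1 / real (Suc n)"
    by (induction n) (auto simp: field_simps)
  finally show ?thesis .
qed

end

locale yule_births_two_intervals = yule_births + two_intervals
begin

definition avoid_martingale :: "real \<Rightarrow> nat \<Rightarrow> 'a \<Rightarrow> real" where
  "avoid_martingale t n \<omega> = avoid_prob (t + birth_time n \<omega>) (Suc n) * of_bool (\<forall>m\<le>n. t + birth_time m \<omega> \<notin> U)"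

lemma borel_measurable_avoid_martingale [measurable]: "avoid_martingale t n \<in> borel_measurable M"
  unfolding avoid_martingale_def[abs_def] atMost_iff[symmetric] by measurable

lemma nn_integral_avoid_prob_next_birth:
  "(\<integral>\<^sup>+\<omega>. ennreal (avoid_prob (s + W n \<omega>) (Suc (Suc n)) * of_bool (s + W n \<omega> \<notin> U)) \<partial>M)
    = ennreal (avoid_prob s (Suc n))"
proof -
  have "(\<integral>\<^sup>+\<omega>. ennreal (avoid_prob (s + W n \<omega>) (Suc (Suc n)) * of_bool (s + W n \<omega> \<notin> U)) \<partial>M)
      = (\<integral>\<^sup>+y. ennreal (exponential_density (real (Suc n)) y) *
          ennreal (avoid_prob (s + y) (Suc (Suc n)) * of_bool (s + y \<notin> U)) \<partial>lborel)"
    by (rule distributed_nn_integral[OF exponential_W, symmetric]) measurable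
  also have "\<dots> = ennreal (avoid_prob s (Suc n))"
    by (rule nn_integral_exponential_avoid_prob) simp
  finally show ?thesis .
qed

lemma nn_integral_avoid_martingale_Suc:
  "(\<integral>\<^sup>+\<omega>. avoid_martingale t (Suc n) \<omega> \<partial>M) = (\<integral>\<^sup>+\<omega>. avoid_martingale t n \<omega> \<partial>M)"
proof -
  define V where "V \<omega> = restrict (\<lambda>j. W j \<omega>) {..<n}" for \<omega>
  define S where "S v = t + (\<Sum>j<n. v j)" for v :: "nat \<Rightarrow> real"
  define E where "E v \<longleftrightarrow> (\<forall>m\<in>{..n}. t + (\<Sum>j<m. v j) \<notin> U)" for v :: "nat \<Rightarrow> real"
  define h where "h x = ennreal (avoid_prob (S (fst x) + snd x) (Suc (Suc n)) *
      of_bool (E (fst x) \<and> S (fst x) + snd x \<notin> U))" for x :: "(nat \<Rightarrow> real) \<times> real"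
  have [measurable]: "S \<in> borel_measurable (PiM {..<n} (\<lambda>_. borel))"
    unfolding S_def[abs_def] using borel_measurable_sum_PiM_components[of "\<lambda>j. j" "{..<n}"] by measurable
  have [measurable]: "Measurable.pred (PiM {..<n} (\<lambda>_. borel)) E"
    unfolding E_def[abs_def]
    by (intro pred_intros_finite pred_sets2[OF sets_U] borel_measurable_add borel_measurable_const
        borel_measurable_sum_PiM_components[of "\<lambda>j. j"]) auto
  have [measurable]: "h \<in> borel_measurable (PiM {..<n} (\<lambda>_. borel) \<Otimes>\<^sub>M borel)"
    unfolding h_def by measurable
  have V_sum: "(\<Sum>j<m. V \<omega> j) = birth_time m \<omega>" if "m \<le> n" for m \<omega>
    using that by (auto simp: V_def birth_time_def intro!: sum.cong)
  have Suc: "ennreal (avoid_martingale t (Suc n) \<omega>) = h (V \<omega>, W n \<omega>)" for \<omega>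
    using V_sum[of n \<omega>] V_sum[of _ \<omega>]
    by (auto simp: h_def avoid_martingale_def S_def E_def birth_time_def le_Suc_eq add.assoc)
  have n: "ennreal (avoid_martingale t n \<omega>) = ennreal (avoid_prob (S (V \<omega>)) (Suc n) * of_bool (E (V \<omega>)))" for \<omega>
    using V_sum by (simp add: avoid_martingale_def S_def E_def Ball_def)
  have next_birth: "(\<integral>\<^sup>+\<omega>'. h (v, W n \<omega>') \<partial>M) = ennreal (avoid_prob (S v) (Suc n) * of_bool (E v))" for v
    using nn_integral_avoid_prob_next_birth[of "S v"] by (cases "E v") (simp_all add: h_def del: of_nat_Suc)
  have "(\<integral>\<^sup>+\<omega>. avoid_martingale t (Suc n) \<omega> \<partial>M) = (\<integral>\<^sup>+\<omega>. \<integral>\<^sup>+\<omega>'. h (V \<omega>, W n \<omega>') \<partial>M \<partial>M)"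
    using nn_integral_indep_blocks[OF indep_W, of "{..<n}" "{n}" "\<lambda>v. v" "PiM {..<n} (\<lambda>_. borel)" "\<lambda>v. v n" borel h]
    by (simp add: Suc V_def measurable_component_singleton)
  also have "\<dots> = (\<integral>\<^sup>+\<omega>. avoid_martingale t n \<omega> \<partial>M)"
    by (simp add: next_birth n)
  finally show ?thesis .
qed

lemma nn_integral_avoid_martingale: "(\<integral>\<^sup>+\<omega>. avoid_martingale t n \<omega> \<partial>M) = ennreal (family_avoid_prob t)"
proof (induction n)
  case 0
  then show ?case
    by (simp add: avoid_martingale_def birth_time_def family_avoid_prob_def emeasure_space_1)
qed (simp add: nn_integral_avoid_martingale_Suc)

definition avoid_event :: "real \<Rightarrow> nat \<Rightarrow> 'a set" where
  "avoid_event t n = {\<omega>\<in>space M. \<forall>m\<le>n. t + birth_time m \<omega> \<notin> U}"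

lemma sets_avoid_event [measurable]: "avoid_event t n \<in> events"
  unfolding avoid_event_def atMost_iff[symmetric] by measurable

lemma family_avoid_prob_le_prob_avoid_event: "family_avoid_prob t \<le> prob (avoid_event t n)"
proof -
  have "ennreal (family_avoid_prob t) = (\<integral>\<^sup>+\<omega>. avoid_martingale t n \<omega> \<partial>M)"
    by (rule nn_integral_avoid_martingale[symmetric])
  also have "\<dots> \<le> (\<integral>\<^sup>+\<omega>. indicator (avoid_event t n) \<omega> \<partial>M)"
    by (intro nn_integral_mono) (auto simp: avoid_event_def avoid_martingale_def avoid_prob_le_1 indicator_def)
  finally show ?thesis
    using family_avoid_prob_nonneg by (simp add: emeasure_eq_measure ennreal_le_iff)
qed

lemma prob_avoid_event_le: "prob (avoid_event t n) \<le> family_avoid_prob t + exp (v2 - t) / real (Suc n)"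
proof -
  define c where "c = exp (v2 - t)"
  \<comment> \<open>Once t + birth_time n \<ge> v2 the martingale equals the indicator; before, c * exp (- birth_time n) \<ge> 1.\<close>
  have "indicator (avoid_event t n) \<omega> \<le> ennreal (avoid_martingale t n \<omega>) + ennreal c * ennreal (exp (- birth_time n \<omega>))"
    if "\<omega> \<in> space M" for \<omega>
  proof (cases "v2 \<le> t + birth_time n \<omega>")
    case True
    then show ?thesis
      using that by (auto simp: avoid_event_def avoid_martingale_def avoid_prob_eq_1 indicator_def)
  next
    case False
    then have "1 \<le> ennreal c * ennreal (exp (- birth_time n \<omega>))"
      by (simp add: c_def ennreal_mult'[symmetric] exp_add[symmetric])
    then show ?thesis
      by (auto simp: indicator_def intro: add_increasing)
  qed
  then have "(\<integral>\<^sup>+\<omega>. indicator (avoid_event t n) \<omega> \<partial>M)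
      \<le> (\<integral>\<^sup>+\<omega>. ennreal (avoid_martingale t n \<omega>) + ennreal c * ennreal (exp (- birth_time n \<omega>)) \<partial>M)"
    by (rule nn_integral_mono)
  also have "\<dots> = (\<integral>\<^sup>+\<omega>. avoid_martingale t n \<omega> \<partial>M) + ennreal c * (\<integral>\<^sup>+\<omega>. exp (- birth_time n \<omega>) \<partial>M)"
    by (simp add: nn_integral_add nn_integral_cmult)
  also have "\<dots> = ennreal (family_avoid_prob t + c / real (Suc n))"
    using family_avoid_prob_nonneg
    by (simp add: nn_integral_avoid_martingale nn_integral_exp_neg_birth_time ennreal_mult'[symmetric] c_def
        del: of_nat_Suc)
  finally show ?thesis
    using family_avoid_prob_nonneg[of t]
    by (simp add: emeasure_eq_measure c_def ennreal_le_iff add_nonneg_nonneg del: ennreal_plus)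
qed

lemma prob_avoid_U: "prob {\<omega>\<in>space M. \<forall>n. t + birth_time n \<omega> \<notin> U} = family_avoid_prob t"
proof -
  have "(\<lambda>n. prob (avoid_event t n)) \<longlonglongrightarrow> prob (\<Inter>n. avoid_event t n)"
    by (rule finite_Lim_measure_decseq) (auto simp: decseq_def avoid_event_def)
  moreover have "(\<lambda>n. prob (avoid_event t n)) \<longlonglongrightarrow> family_avoid_prob t"
  proof (rule tendsto_sandwich[OF always_eventually always_eventually, where f="\<lambda>_. family_avoid_prob t"
        and h="\<lambda>n. family_avoid_prob t + exp (v2 - t) / real (Suc n)"])
    show "(\<lambda>n. family_avoid_prob t + exp (v2 - t) / real (Suc n)) \<longlonglongrightarrow> family_avoid_prob t"
      using tendsto_add[OF tendsto_const tendsto_mult[OF tendsto_const LIMSEQ_inverse_real_of_nat]]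
      by (simp add: divide_inverse)
  qed (use family_avoid_prob_le_prob_avoid_event prob_avoid_event_le in blast)+
  moreover have "(\<Inter>n. avoid_event t n) = {\<omega>\<in>space M. \<forall>n. t + birth_time n \<omega> \<notin> U}"
    by (auto simp: avoid_event_def)
  ultimately show ?thesis
    using LIMSEQ_unique by auto
qed

lemma hit_prob_eq: "hit_prob U t = ennreal (1 - family_avoid_prob t)"
proof -
  define A where "A = {\<omega>\<in>space M. \<forall>n. t + birth_time n \<omega> \<notin> U}"
  have [measurable]: "A \<in> events"
    unfolding A_def by measurable
  have "hit_prob U t = (\<integral>\<^sup>+\<omega>. of_bool (hits U (t, \<lambda>j. W j \<omega>)) \<partial>M)"
    unfolding hit_prob_def by (rule nn_integral_W_sequence[symmetric]) measurable
  also have "\<dots> = (\<integral>\<^sup>+\<omega>. indicator (space M - A) \<omega> \<partial>M)"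
    by (intro nn_integral_cong) (auto simp: hits_def A_def birth_time_def indicator_def)
  also have "\<dots> = ennreal (1 - family_avoid_prob t)"
    using prob_avoid_U[of t] by (simp add: A_def[symmetric] emeasure_eq_measure prob_compl)
  finally show ?thesis .
qed

end

lemma family_birth_eq: "family_birth X Y k n \<omega> = immigrant_arrival X k \<omega> + (\<Sum>j<n. Y k j \<omega>)"
  by (induction n) auto

locale yule_immigration = prob_space M for M :: "'a measure" +
  fixes \<theta> :: real and X :: "nat \<Rightarrow> 'a \<Rightarrow> real" and Y :: "nat \<Rightarrow> nat \<Rightarrow> 'a \<Rightarrow> real"
  assumes theta_pos: "0 < \<theta>"
    and indep_XY: "indep_vars (\<lambda>_. borel) (\<lambda>i. case i of Inl k \<Rightarrow> X k | Inr (k, j) \<Rightarrow> Y k j) UNIV"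
    and exponential_X: "\<And>k. distributed M lborel (X k) (exponential_density \<theta>)"
    and exponential_Y: "\<And>k j. distributed M lborel (Y k j) (exponential_density (real (Suc j)))"
begin

lemma measurable_X [measurable]: "X k \<in> borel_measurable M"
  using exponential_X[of k] by (simp add: distributed_def)

lemma measurable_Y [measurable]: "Y k j \<in> borel_measurable M"
  using exponential_Y[of k j] by (simp add: distributed_def)

lemma indep_vars_X: "indep_vars (\<lambda>_. borel) X UNIV"
  using indep_vars_reindex[OF indep_vars_subset[OF indep_XY], of Inl UNIV] by (simp add: inj_on_def)

lemma yule_births_Y: "yule_births M (Y k)"
proof
  show "indep_vars (\<lambda>_. borel) (Y k) UNIV"
    using indep_vars_reindex[OF indep_vars_subset[OF indep_XY], of "\<lambda>j. Inr (k, j)" UNIV]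
    by (simp add: inj_on_def)
qed (rule exponential_Y)

lemma distributed_sum_X:
  "finite I \<Longrightarrow> I \<noteq> {} \<Longrightarrow> distributed M lborel (\<lambda>\<omega>. \<Sum>i\<in>I. X i \<omega>) (erlang_density (card I - 1) \<theta>)"
  using exponential_distributed_sum[OF _ _ theta_pos exponential_X indep_vars_subset[OF indep_vars_X]] by simp

lemma nn_integral_sum_X_Y:
  assumes "finite I" "I \<noteq> {}" and [measurable]: "f \<in> borel_measurable (borel \<Otimes>\<^sub>M PiM UNIV (\<lambda>_. borel))"
  shows "(\<integral>\<^sup>+\<omega>. f (\<Sum>i\<in>I. X i \<omega>, \<lambda>j. Y k j \<omega>) \<partial>M)
       = (\<integral>\<^sup>+s. erlang_density (card I - 1) \<theta> s * (\<integral>\<^sup>+w. f (s, w) \<partial>yule_waits) \<partial>lborel)"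
proof -
  interpret yule_births M "Y k"
    by (rule yule_births_Y)
  have disjoint: "Inl ` I \<inter> range (\<lambda>j. Inr (k, j)) = {}"
    by auto
  have "(\<integral>\<^sup>+\<omega>. f (\<Sum>i\<in>I. X i \<omega>, \<lambda>j. Y k j \<omega>) \<partial>M)
      = (\<integral>\<^sup>+\<omega>. \<integral>\<^sup>+\<omega>'. f (\<Sum>i\<in>I. X i \<omega>, \<lambda>j. Y k j \<omega>') \<partial>M \<partial>M)"
    using nn_integral_indep_blocks[OF indep_XY disjoint _ _ _ _ assms(3),
        of "\<lambda>x. \<Sum>i\<in>I. x (Inl i)" "\<lambda>x j. x (Inr (k, j))"]
    by (simp add: borel_measurable_sum_PiM_components measurable_PiM_reindex image_subset_iff)
  also have "\<dots> = (\<integral>\<^sup>+\<omega>. (\<lambda>s. \<integral>\<^sup>+w. f (s, w) \<partial>yule_waits) (\<Sum>i\<in>I. X i \<omega>) \<partial>M)"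
    by (intro nn_integral_cong nn_integral_W_sequence) measurable
  also have "\<dots> = (\<integral>\<^sup>+s. erlang_density (card I - 1) \<theta> s * (\<integral>\<^sup>+w. f (s, w) \<partial>yule_waits) \<partial>lborel)"
    using assms by (intro distributed_nn_integral[OF distributed_sum_X, symmetric]) measurable
  finally show ?thesis .
qed

definition family :: "nat \<Rightarrow> 'a \<Rightarrow> real \<times> (nat \<Rightarrow> real)" where
  "family k \<omega> = (immigrant_arrival X k \<omega>, \<lambda>j. Y k j \<omega>)"

lemma measurable_Y_sequence [measurable]: "(\<lambda>\<omega> j. Y k j \<omega>) \<in> measurable M (PiM UNIV (\<lambda>_. borel))"
  using yule_births.measurable_W_sequence[OF yule_births_Y] .

lemma measurable_family [measurable]: "family k \<in> measurable M (borel \<Otimes>\<^sub>M PiM UNIV (\<lambda>_. borel))"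
  unfolding family_def[abs_def] immigrant_arrival_def[abs_def] by measurable

definition hit_count :: "real set \<Rightarrow> 'a \<Rightarrow> ennreal" where
  "hit_count U \<omega> = (\<Sum>k. of_bool (hits U (family k \<omega>)))"

lemma borel_measurable_hit_count [measurable]:
  assumes [measurable]: "U \<in> sets borel"
  shows "hit_count U \<in> borel_measurable M"
  unfolding hit_count_def[abs_def] by measurable

lemma observable_families_eq: "observable_families X Y a b \<omega> = enn2real (hit_count {a<..<b} \<omega>)"
  by (simp add: observable_families_def hit_count_def enn2real_suminf_of_bool hits_def family_def family_birth_eq)

lemma nn_integral_family_hits_mult:
  assumes [measurable]: "U \<in> sets borel" "H \<in> borel_measurable borel"
  shows "(\<integral>\<^sup>+\<omega>. of_bool (hits U (family k \<omega>)) * H (immigrant_arrival X k \<omega>) \<partial>M)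
       = (\<integral>\<^sup>+t. erlang_density k \<theta> t * (hit_prob U t * H t) \<partial>lborel)"
  using nn_integral_sum_X_Y[of "{..k}" "\<lambda>x. of_bool (hits U x) * H (fst x)" k]
  by (simp add: family_def immigrant_arrival_def hit_prob_def nn_integral_multc)

lemma nn_integral_hit_count_eq_suminf:
  assumes [measurable]: "U \<in> sets borel"
  shows "(\<integral>\<^sup>+\<omega>. hit_count U \<omega> \<partial>M) = (\<Sum>k. \<integral>\<^sup>+\<omega>. of_bool (hits U (family k \<omega>)) \<partial>M)"
  unfolding hit_count_def by (rule nn_integral_suminf) measurable

lemma nn_integral_hit_count:
  assumes [measurable]: "U \<in> sets borel"
  shows "(\<integral>\<^sup>+\<omega>. hit_count U \<omega> \<partial>M) = ennreal \<theta> * (\<integral>\<^sup>+t. hit_prob U t * indicator {0..} t \<partial>lborel)"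
  using nn_integral_family_hits_mult[of U "\<lambda>_. 1"]
  by (simp add: nn_integral_hit_count_eq_suminf suminf_nn_integral_erlang_density theta_pos)

lemma nn_integral_indep_families:
  assumes "k < l"
    and "h \<in> borel_measurable ((borel \<Otimes>\<^sub>M PiM UNIV (\<lambda>_. borel)) \<Otimes>\<^sub>M (borel \<Otimes>\<^sub>M PiM UNIV (\<lambda>_. borel)))"
  shows "(\<integral>\<^sup>+\<omega>. h (family k \<omega>, (\<Sum>i\<in>{k<..l}. X i \<omega>, \<lambda>j. Y l j \<omega>)) \<partial>M)
       = (\<integral>\<^sup>+\<omega>. \<integral>\<^sup>+\<omega>'. h (family k \<omega>, (\<Sum>i\<in>{k<..l}. X i \<omega>', \<lambda>j. Y l j \<omega>')) \<partial>M \<partial>M)"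
proof -
  define A :: "(nat + nat \<times> nat) set" where "A = Inl ` {..k} \<union> range (\<lambda>j. Inr (k, j))"
  define B :: "(nat + nat \<times> nat) set" where "B = Inl ` {k<..l} \<union> range (\<lambda>j. Inr (l, j))"
  have disjoint: "A \<inter> B = {}"
    using \<open>k < l\<close> by (auto simp: A_def B_def)
  have family_k: "(\<lambda>x. (\<Sum>i\<le>k. x (Inl i) :: real, \<lambda>j. x (Inr (k, j))))
      \<in> measurable (PiM A (\<lambda>_. borel)) (borel \<Otimes>\<^sub>M PiM UNIV (\<lambda>_. borel))"
    unfolding A_def
    by (intro measurable_Pair borel_measurable_sum_PiM_components measurable_PiM_reindex) auto
  have family_l: "(\<lambda>x. (\<Sum>i\<in>{k<..l}. x (Inl i) :: real, \<lambda>j. x (Inr (l, j))))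
      \<in> measurable (PiM B (\<lambda>_. borel)) (borel \<Otimes>\<^sub>M PiM UNIV (\<lambda>_. borel))"
    unfolding B_def
    by (intro measurable_Pair borel_measurable_sum_PiM_components measurable_PiM_reindex) auto
  show ?thesis
    using nn_integral_indep_blocks[OF indep_XY disjoint subset_UNIV subset_UNIV family_k family_l assms(2)]
    by (simp add: A_def B_def family_def immigrant_arrival_def)
qed

lemma nn_integral_two_families:
  assumes "k < l" and [measurable]: "U \<in> sets borel" "V \<in> sets borel"
  shows "(\<integral>\<^sup>+\<omega>. of_bool (hits U (family k \<omega>)) * of_bool (hits V (family l \<omega>)) \<partial>M)
       = (\<integral>\<^sup>+t. erlang_density k \<theta> t *
            (hit_prob U t * (\<integral>\<^sup>+r. erlang_density (l - Suc k) \<theta> r * hit_prob V (t + r) \<partial>lborel)) \<partial>lborel)"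
proof -
  define R where "R \<omega> = (\<Sum>i\<in>{k<..l}. X i \<omega>)" for \<omega>
  define H where "H t = (\<integral>\<^sup>+r. erlang_density (l - Suc k) \<theta> r * hit_prob V (t + r) \<partial>lborel)" for t
  have [measurable]: "H \<in> borel_measurable borel"
    unfolding H_def by measurable
  have "{..l} = {..k} \<union> {k<..l}"
    using \<open>k < l\<close> by auto
  then have arrival_l: "immigrant_arrival X l \<omega> = immigrant_arrival X k \<omega> + R \<omega>" for \<omega>
    by (simp add: immigrant_arrival_def R_def sum.union_disjoint ivl_disj_int)
  have later_family: "(\<integral>\<^sup>+\<omega>'. of_bool (hits V (t + R \<omega>', \<lambda>j. Y l j \<omega>')) \<partial>M) = H t" for t
    using nn_integral_sum_X_Y[of "{k<..l}" "\<lambda>x. of_bool (hits V (t + fst x, snd x))" l] \<open>k < l\<close>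
    by (simp add: R_def H_def hit_prob_def)
  have "(\<lambda>(x, y). of_bool (hits U x) * of_bool (hits V (fst x + fst y, snd y)) :: ennreal)
      \<in> borel_measurable ((borel \<Otimes>\<^sub>M PiM UNIV (\<lambda>_. borel)) \<Otimes>\<^sub>M (borel \<Otimes>\<^sub>M PiM UNIV (\<lambda>_. borel)))"
    by measurable
  from nn_integral_indep_families[OF \<open>k < l\<close> this]
  have "(\<integral>\<^sup>+\<omega>. of_bool (hits U (family k \<omega>)) * of_bool (hits V (family l \<omega>)) \<partial>M)
      = (\<integral>\<^sup>+\<omega>. \<integral>\<^sup>+\<omega>'. of_bool (hits U (family k \<omega>)) *
            of_bool (hits V (immigrant_arrival X k \<omega> + R \<omega>', \<lambda>j. Y l j \<omega>')) \<partial>M \<partial>M)"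
    by (simp add: family_def arrival_l R_def)
  also have "\<dots> = (\<integral>\<^sup>+\<omega>. of_bool (hits U (family k \<omega>)) * H (immigrant_arrival X k \<omega>) \<partial>M)"
  proof (rule nn_integral_cong)
    fix \<omega>
    have "(\<lambda>\<omega>'. of_bool (hits V (immigrant_arrival X k \<omega> + R \<omega>', \<lambda>j. Y l j \<omega>')) :: ennreal) \<in> borel_measurable M"
      unfolding R_def by measurable
    then show "(\<integral>\<^sup>+\<omega>'. of_bool (hits U (family k \<omega>)) *
        of_bool (hits V (immigrant_arrival X k \<omega> + R \<omega>', \<lambda>j. Y l j \<omega>')) \<partial>M)
        = of_bool (hits U (family k \<omega>)) * H (immigrant_arrival X k \<omega>)"
      by (simp add: nn_integral_cmult later_family)
  qed
  also have "\<dots> = (\<integral>\<^sup>+t. erlang_density k \<theta> t * (hit_prob U t * H t) \<partial>lborel)"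
    by (rule nn_integral_family_hits_mult) measurable
  finally show ?thesis
    by (simp add: H_def)
qed

lemma suminf_nn_integral_ordered_families:
  assumes [measurable]: "U \<in> sets borel" "V \<in> sets borel"
  shows "(\<Sum>k. \<Sum>m. \<integral>\<^sup>+\<omega>. of_bool (hits U (family k \<omega>)) * of_bool (hits V (family (m + Suc k) \<omega>)) \<partial>M)
       = ennreal \<theta> * ennreal \<theta> *
           (\<integral>\<^sup>+t. hit_prob U t * indicator {0..} t * (\<integral>\<^sup>+r. hit_prob V (t + r) * indicator {0..} r \<partial>lborel) \<partial>lborel)"
proof -
  define H where "H t = (\<integral>\<^sup>+r. hit_prob V (t + r) * indicator {0..} r \<partial>lborel)" for t
  have [measurable]: "H \<in> borel_measurable borel"
    unfolding H_def by measurable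
  have later: "(\<Sum>m. \<integral>\<^sup>+r. erlang_density m \<theta> r * hit_prob V (t + r) \<partial>lborel) = ennreal \<theta> * H t" for t
    unfolding H_def by (rule suminf_nn_integral_erlang_density[OF theta_pos]) measurable
  have "(\<Sum>k. \<Sum>m. \<integral>\<^sup>+\<omega>. of_bool (hits U (family k \<omega>)) * of_bool (hits V (family (m + Suc k) \<omega>)) \<partial>M)
      = (\<Sum>k. \<Sum>m. \<integral>\<^sup>+t. erlang_density k \<theta> t *
           (hit_prob U t * (\<integral>\<^sup>+r. erlang_density m \<theta> r * hit_prob V (t + r) \<partial>lborel)) \<partial>lborel)"
    by (simp add: nn_integral_two_families)
  also have "\<dots> = (\<Sum>k. \<integral>\<^sup>+t. erlang_density k \<theta> t * (hit_prob U t * (ennreal \<theta> * H t)) \<partial>lborel)"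
    by (subst nn_integral_suminf[symmetric]) (simp_all add: ennreal_suminf_cmult later)
  also have "\<dots> = ennreal \<theta> * (\<integral>\<^sup>+t. ennreal \<theta> * (hit_prob U t * indicator {0..} t * H t) \<partial>lborel)"
    by (subst suminf_nn_integral_erlang_density[OF theta_pos]) (simp_all add: mult_ac)
  also have "\<dots> = ennreal \<theta> * ennreal \<theta> * (\<integral>\<^sup>+t. hit_prob U t * indicator {0..} t * H t \<partial>lborel)"
    by (simp add: nn_integral_cmult mult.assoc)
  finally show ?thesis
    by (simp add: H_def)
qed

lemma nn_integral_hit_count_mult:
  assumes [measurable]: "U \<in> sets borel" "V \<in> sets borel"
  shows "(\<integral>\<^sup>+\<omega>. hit_count U \<omega> * hit_count V \<omega> \<partial>M)
       = (\<integral>\<^sup>+\<omega>. hit_count U \<omega> \<partial>M) * (\<integral>\<^sup>+\<omega>. hit_count V \<omega> \<partial>M)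
         + (\<Sum>k. \<integral>\<^sup>+\<omega>. of_bool (hits U (family k \<omega>)) * of_bool (hits V (family k \<omega>)) \<partial>M)"
proof -
  define g where "g k l = (\<integral>\<^sup>+\<omega>. of_bool (hits U (family k \<omega>)) * of_bool (hits V (family l \<omega>)) \<partial>M)" for k l
  define J where "J U V = (\<integral>\<^sup>+t. hit_prob U t * indicator {0..} t *
      (\<integral>\<^sup>+r. hit_prob V (t + r) * indicator {0..} r \<partial>lborel) \<partial>lborel)" for U V
  have UV: "(\<Sum>k. \<Sum>m. g k (m + Suc k)) = ennreal \<theta> * ennreal \<theta> * J U V"
    unfolding g_def J_def by (rule suminf_nn_integral_ordered_families) measurable
  have VU: "(\<Sum>l. \<Sum>m. g (m + Suc l) l) = ennreal \<theta> * ennreal \<theta> * J V U"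
    unfolding g_def J_def
    by (subst mult.commute, rule suminf_nn_integral_ordered_families) measurable
  have "J U V + J V U = (\<integral>\<^sup>+t. hit_prob U t * indicator {0..} t \<partial>lborel) *
      (\<integral>\<^sup>+t. hit_prob V t * indicator {0..} t \<partial>lborel)"
    unfolding J_def by (rule nn_integral_product_split_order) measurable
  then have cross: "(\<Sum>k. \<Sum>m. g k (m + Suc k)) + (\<Sum>l. \<Sum>m. g (m + Suc l) l)
      = (\<integral>\<^sup>+\<omega>. hit_count U \<omega> \<partial>M) * (\<integral>\<^sup>+\<omega>. hit_count V \<omega> \<partial>M)"
    unfolding UV VU nn_integral_hit_count[OF assms(1)] nn_integral_hit_count[OF assms(2)]
    by (simp only: distrib_left[symmetric] mult_ac)
  have "(\<integral>\<^sup>+\<omega>. hit_count U \<omega> * hit_count V \<omega> \<partial>M)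
      = (\<integral>\<^sup>+\<omega>. (\<Sum>k. \<Sum>l. of_bool (hits U (family k \<omega>)) * of_bool (hits V (family l \<omega>))) \<partial>M)"
    by (simp add: hit_count_def ennreal_suminf_multc ennreal_suminf_cmult)
  also have "\<dots> = (\<Sum>k. \<integral>\<^sup>+\<omega>. (\<Sum>l. of_bool (hits U (family k \<omega>)) * of_bool (hits V (family l \<omega>))) \<partial>M)"
    by (rule nn_integral_suminf) measurable
  also have "\<dots> = (\<Sum>k. \<Sum>l. g k l)"
    unfolding g_def by (intro suminf_cong nn_integral_suminf) measurable
  also have "\<dots> = (\<Sum>k. g k k) + ((\<Sum>k. \<Sum>m. g k (m + Suc k)) + (\<Sum>l. \<Sum>m. g (m + Suc l) l))"
    by (subst suminf_ennreal_split_diagonal) (rule add.assoc)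
  also have "\<dots> = (\<Sum>k. g k k) + (\<integral>\<^sup>+\<omega>. hit_count U \<omega> \<partial>M) * (\<integral>\<^sup>+\<omega>. hit_count V \<omega> \<partial>M)"
    by (simp only: cross)
  finally show ?thesis
    by (simp only: g_def add.commute)
qed

lemma nn_integral_hit_count_mult_union:
  assumes [measurable]: "U \<in> sets borel" "V \<in> sets borel"
  shows "(\<integral>\<^sup>+\<omega>. hit_count U \<omega> * hit_count V \<omega> \<partial>M) + (\<integral>\<^sup>+\<omega>. hit_count (U \<union> V) \<omega> \<partial>M)
       = (\<integral>\<^sup>+\<omega>. hit_count U \<omega> \<partial>M) * (\<integral>\<^sup>+\<omega>. hit_count V \<omega> \<partial>M)
         + (\<integral>\<^sup>+\<omega>. hit_count U \<omega> \<partial>M) + (\<integral>\<^sup>+\<omega>. hit_count V \<omega> \<partial>M)"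
proof -
  have inclusion_exclusion: "of_bool (hits U x) * of_bool (hits V x) + of_bool (hits (U \<union> V) x)
      = of_bool (hits U x) + (of_bool (hits V x) :: ennreal)" for x
    by (auto simp: hits_def)
  have "(\<Sum>k. \<integral>\<^sup>+\<omega>. of_bool (hits U (family k \<omega>)) * of_bool (hits V (family k \<omega>)) \<partial>M)
      + (\<integral>\<^sup>+\<omega>. hit_count (U \<union> V) \<omega> \<partial>M)
      = (\<Sum>k. \<integral>\<^sup>+\<omega>. of_bool (hits U (family k \<omega>)) * of_bool (hits V (family k \<omega>))
            + of_bool (hits (U \<union> V) (family k \<omega>)) \<partial>M)"
    by (simp add: nn_integral_hit_count_eq_suminf nn_integral_add suminf_add[OF summableI summableI])
  also have "\<dots> = (\<integral>\<^sup>+\<omega>. hit_count U \<omega> \<partial>M) + (\<integral>\<^sup>+\<omega>. hit_count V \<omega> \<partial>M)"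
    by (simp add: inclusion_exclusion nn_integral_hit_count_eq_suminf nn_integral_add
        suminf_add[OF summableI summableI])
  finally show ?thesis
    by (simp add: nn_integral_hit_count_mult add_ac)
qed

lemma nn_integral_hit_count_two_intervals:
  assumes "two_intervals u1 v1 u2 v2" "0 \<le> u1"
  shows "(\<integral>\<^sup>+\<omega>. hit_count ({u1<..<v1} \<union> {u2<..<v2}) \<omega> \<partial>M)
       = ennreal (\<theta> * ln (1 + (exp v1 - exp u1) + (exp v2 - exp u2)))"
proof -
  interpret yule_births_two_intervals M "Y 0" u1 v1 u2 v2
    by (rule yule_births_two_intervals.intro[OF yule_births_Y assms(1)])
  have "(\<integral>\<^sup>+\<omega>. hit_count U \<omega> \<partial>M) = ennreal \<theta> * ennreal (ln (1 + L 0))"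
    by (simp add: nn_integral_hit_count hit_prob_eq nn_integral_family_hit_prob)
  then show ?thesis
    using theta_pos assms(2) L_nonneg[of 0] by (simp add: U_def L_0 ennreal_mult' add.assoc)
qed

lemma covariance_hit_count_intervals:
  assumes "0 \<le> a" "a < b" "b \<le> c" "c < d"
  defines "p \<equiv> exp b - exp a" and "q \<equiv> exp d - exp c"
  shows "covariance (\<lambda>\<omega>. enn2real (hit_count {a<..<b} \<omega>)) (\<lambda>\<omega>. enn2real (hit_count {c<..<d} \<omega>))
       = \<theta> * ln (1 + p) + \<theta> * ln (1 + q) - \<theta> * ln (1 + p + q)"
    (is "_ = ?eA + ?eB - ?eAB")
proof -
  have "0 < p" "0 < q"
    using assms by simp_all
  then have nonneg: "0 \<le> ?eA" "0 \<le> ?eB" "0 \<le> ?eAB"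
    using theta_pos by (auto intro!: mult_nonneg_nonneg ln_ge_zero)
  have "two_intervals a b b b" "two_intervals c d d d" "two_intervals a b c d"
    using assms by (auto intro!: two_intervals.intro)
  from this[THEN nn_integral_hit_count_two_intervals] assms
  have mean: "(\<integral>\<^sup>+\<omega>. hit_count {a<..<b} \<omega> \<partial>M) = ennreal ?eA" "(\<integral>\<^sup>+\<omega>. hit_count {c<..<d} \<omega> \<partial>M) = ennreal ?eB"
    "(\<integral>\<^sup>+\<omega>. hit_count ({a<..<b} \<union> {c<..<d}) \<omega> \<partial>M) = ennreal ?eAB"
    by simp_all
  have "(\<integral>\<^sup>+\<omega>. hit_count {a<..<b} \<omega> * hit_count {c<..<d} \<omega> \<partial>M) + ennreal ?eAB
      = ennreal (?eA * ?eB + ?eA + ?eB)"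
    using nn_integral_hit_count_mult_union[of "{a<..<b}" "{c<..<d}"] nonneg
    by (simp add: mean ennreal_mult)
  from ennreal_eq_diff_if_add_eq[OF this] nonneg
  have product: "(\<integral>\<^sup>+\<omega>. hit_count {a<..<b} \<omega> * hit_count {c<..<d} \<omega> \<partial>M)
      = ennreal (?eA * ?eB + ?eA + ?eB - ?eAB)" and "?eAB \<le> ?eA * ?eB + ?eA + ?eB"
    by simp_all
  then show ?thesis
    using covariance_enn2real[OF _ _ mean(1,2) product] nonneg by simp
qed

end

theorem corollary2:
  fixes M :: "'a measure" and \<theta> a b c d :: real
    and X :: "nat \<Rightarrow> 'a \<Rightarrow> real" and Y :: "nat \<Rightarrow> nat \<Rightarrow> 'a \<Rightarrow> real"
  assumes "prob_space M"
    and "\<theta> > 0"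
    and "prob_space.indep_vars M (\<lambda>_. borel)
           (\<lambda>i. case i of Inl k \<Rightarrow> X k | Inr (k, j) \<Rightarrow> Y k j) UNIV"
    and "\<And>k. distributed M lborel (X k) (exponential_density \<theta>)"
    and "\<And>k j. distributed M lborel (Y k j) (exponential_density (real (Suc j)))"
    and "0 \<le> a" "a < b" "b \<le> c" "c < d"
  shows "prob_space.covariance M (observable_families X Y a b) (observable_families X Y c d)
       = \<theta> * ln ((exp b - exp a + 1) * (exp d - exp c + 1) / (exp d - exp c + exp b - exp a + 1))"
proof -
  interpret yule_immigration M \<theta> X Y
    using assms(1-5) by (intro yule_immigration.intro yule_immigration_axioms.intro) auto
  define p q where "p = exp b - exp a" and "q = exp d - exp c"
  have "0 < p" "0 < q"
    using assms(7,9) by (simp_all add: p_def q_def)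
  then have "ln ((p + 1) * (q + 1) / (q + p + 1)) = ln (1 + p) + ln (1 + q) - ln (1 + p + q)"
    by (simp add: ln_div ln_mult add_ac)
  then have "covariance (observable_families X Y a b) (observable_families X Y c d)
      = \<theta> * ln ((p + 1) * (q + 1) / (q + p + 1))"
    using covariance_hit_count_intervals[OF assms(6-9)]
    by (simp add: observable_families_eq[abs_def] p_def q_def right_diff_distrib distrib_left)
  also have "q + p + 1 = exp d - exp c + exp b - exp a + 1"
    by (simp add: p_def q_def)
  finally show ?thesis
    unfolding p_def q_def .
qed

end
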